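(* Let $\alpha>-1$, $\alpha\ne0$, let $\eta_1=\eta_1(\alpha)\in(0,1)$ be the root of $\eta^\alpha=\dfrac{1}{1+\alpha(\eta+1)}$, and let $$\psi_0(\alpha,\eta)=\dfrac{(1+\eta^{\alpha+1})^{1/\alpha}}{(1+\eta)^{(\alpha+1)/\alpha}}+\dfrac{(\alpha+1)^{(\alpha+1)/\alpha}}{\alpha}\left[\dfrac1{1+\eta^{\alpha+1}}-\dfrac1{1+\eta}\right].$$ Then the function $\eta\mapsto\psi_0(\alpha,\eta)$ attains its maximal value on $[0,\eta_1]$ at an interior point $\eta_{\max}=\eta_{\max}(\alpha)\in(0,\eta_1)$, at which $\dfrac{\partial}{\partial\eta}\psi_0(\alpha,\eta_{\max})=0$. *)

theory Defs
  imports Complex_Main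
begin

definition psi0 :: "real \<Rightarrow> real \<Rightarrow> real" where
  "psi0 \<alpha> \<eta> =
     (1 + \<eta> powr (\<alpha> + 1)) powr (1 / \<alpha>) / (1 + \<eta>) powr ((\<alpha> + 1) / \<alpha>)
     + ((\<alpha> + 1) powr ((\<alpha> + 1) / \<alpha>) / \<alpha>)
       * (1 / (1 + \<eta> powr (\<alpha> + 1)) - 1 / (1 + \<eta>))"

end

theory Submission
  imports Defs
begin

text \<open>
  \<open>\<psi>\<^sub>0(\<alpha>, \<cdot>)\<close> is continuous on \<open>[0, \<eta>\<^sub>1]\<close> and differentiable on \<open>(0, \<eta>\<^sub>1]\<close>, so it
  attains its maximum, and it suffices that \<open>\<psi>\<^sub>0'\<close> is positive near \<open>0\<close> and negative at
  \<open>\<eta>\<^sub>1\<close>. Near \<open>0\<close> one writes \<open>\<alpha> \<psi>\<^sub>0'(\<eta>) = \<eta>\<^sup>\<alpha> G(\<eta>) + H(\<eta>)\<close> with continuous \<open>G, H\<close>,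
  \<open>G(0) = (\<alpha>+1)(1 - c)\<close>, \<open>H(0) = c - (\<alpha>+1)\<close> and \<open>c = (\<alpha>+1)\<^bsup>(\<alpha>+1)/\<alpha>\<^esup> > max 1 (\<alpha>+1)\<close>:
  for \<open>\<alpha> > 0\<close> the first term vanishes and \<open>H(0) > 0\<close> wins, for \<open>\<alpha> < 0\<close> the factor
  \<open>\<eta>\<^sup>\<alpha>\<close> blows up and \<open>G(0) < 0\<close> wins. At \<open>\<eta>\<^sub>1\<close> the relation
  \<open>\<eta>\<^sub>1\<^sup>\<alpha> (1 + \<alpha>(\<eta>\<^sub>1+1)) = 1\<close> collapses \<open>\<psi>\<^sub>0'(\<eta>\<^sub>1)\<close> to minus a sum of two positive
  terms.
\<close>

definition dpsi0 :: "real \<Rightarrow> real \<Rightarrow> real" where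
  "dpsi0 a x =
     ((a + 1) * ((1 + x powr (a + 1)) powr (1 / a) / (1 + x) powr ((a + 1) / a))
        * (x powr a - 1) / ((1 + x powr (a + 1)) * (1 + x))
      + (a + 1) powr ((a + 1) / a)
        * (1 / (1 + x) ^ 2 - (a + 1) * x powr a / (1 + x powr (a + 1)) ^ 2)) / a"

lemma one_plus_powr_pos: "0 < 1 + (x::real) powr p"
  by (simp add: add_pos_nonneg)

lemma has_real_derivative_psi0:
  fixes a x :: real
  assumes "a \<noteq> 0" "0 < x"
  shows "(psi0 a has_real_derivative dpsi0 a x) (at x)"
proof -
  have pos: "0 < 1 + x powr (a + 1)" "0 < 1 + x" using assms(2) by (simp_all add: one_plus_powr_pos)
  have exps: "(1 + x powr (a + 1)) powr (1 / a - 1) = (1 + x powr (a + 1)) powr (1 / a) / (1 + x powr (a + 1))"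
    "(1 + x) powr ((a + 1) / a - 1) = (1 + x) powr ((a + 1) / a) / (1 + x)"
    "x powr (a + 1 - 1) = x powr a"
    using pos by (simp_all add: powr_diff)
  have powr_succ: "x powr (a + 1) = x powr a * x" using assms(2) by (simp add: powr_add)
  show ?thesis
    unfolding psi0_def[abs_def]
    apply (rule derivative_eq_intros refl | (use assms pos in \<open>simp; fail\<close>))+
    using assms pos
    by (simp only: exps dpsi0_def, simp add: divide_simps powr_succ) algebra
qed

lemma dpsi0_at_root:
  fixes a x :: real
  assumes "-1 < a" "a \<noteq> 0" "0 < x" and root: "x powr a = 1 / (1 + a * (x + 1))"
  shows "dpsi0 a x = - ((1 + x powr (a + 1)) powr (1 / a) / (1 + x) powr ((a + 1) / a) / (1 + x)
                      + (a + 1) powr ((a + 1) / a) * x / ((a + 1) * (1 + x) ^ 2))"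
proof -
  define t where "t = x powr a"
  have "0 < t" using assms(3) by (simp add: t_def)
  then have "0 < 1 + a * (x + 1)" using root by (simp add: t_def zero_less_divide_iff)
  then have root': "t * (1 + a * (x + 1)) = 1" using root by (simp add: t_def)
  have "t - 1 = - a * t * (1 + x)" "(a + 1) * t - 1 = - a * t * x"
    using root' by algebra+
  moreover have "1 + x powr (a + 1) = (a + 1) * t * (1 + x)"
    using root' assms(3) by (simp add: t_def powr_add algebra_simps)
  ultimately show ?thesis
    using assms(1-3) \<open>0 < t\<close>
    by (simp add: dpsi0_def t_def[symmetric], simp add: divide_simps) algebra
qed

lemma dpsi0_neg_at_root:
  fixes a x :: real
  assumes "-1 < a" "a \<noteq> 0" "0 < x" and "x powr a = 1 / (1 + a * (x + 1))"
  shows "dpsi0 a x < 0"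
proof -
  have "0 < (1 + x powr (a + 1)) powr (1 / a) / (1 + x) powr ((a + 1) / a) / (1 + x)"
    using assms(3) one_plus_powr_pos[of x "a + 1"] by simp
  moreover have "0 < (a + 1) powr ((a + 1) / a) * x / ((a + 1) * (1 + x) ^ 2)"
    using assms(1,3) by simp
  ultimately show ?thesis by (simp add: dpsi0_at_root[OF assms])
qed

lemma continuous_on_powr_nonneg:
  fixes p :: real
  assumes "0 < p"
  shows "continuous_on {0..} (\<lambda>x. x powr p)"
  using assms by (intro continuous_on_powr') (auto intro: continuous_intros)

lemma succ_powr_succ_div_gt_max:
  fixes a :: real
  assumes "-1 < a" "a \<noteq> 0"
  shows "max 1 (a + 1) < (a + 1) powr ((a + 1) / a)"
proof (cases "0 < a")
  case True
  then have "(a + 1) powr 1 < (a + 1) powr ((a + 1) / a)"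
    by (intro powr_less_mono) (auto simp: field_simps)
  with True show ?thesis by simp
next
  case False
  with assms have "a < 0" by simp
  then have "(a + 1) / a < 0" using assms(1) by (simp add: divide_pos_neg)
  from powr_less_mono2_neg[OF this, of "a + 1" 1] assms(1) \<open>a < 0\<close>
  show ?thesis by simp
qed

lemma tendsto_powr_at_right_0:
  fixes p :: real
  assumes "0 < p"
  shows "((\<lambda>x. x powr p) \<longlongrightarrow> 0) (at_right 0)"
  using continuous_on_Icc_at_rightD[OF continuous_on_subset[OF continuous_on_powr_nonneg[OF assms]],
      of 0 1] assms
  by simp

lemma continuous_on_psi0:
  fixes a :: real
  assumes "-1 < a"
  shows "continuous_on {0..} (psi0 a)"
proof -
  have powr: "continuous_on {0..} (\<lambda>x::real. x powr (a + 1))"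
    using assms by (intro continuous_on_powr_nonneg) simp
  show ?thesis
    unfolding psi0_def[abs_def]
    by (intro continuous_intros powr) (auto simp: less_imp_neq[symmetric] one_plus_powr_pos)
qed

lemma scaled_dpsi0_decomposition:
  fixes a :: real
  assumes "-1 < a" "a \<noteq> 0"
  defines "C \<equiv> (a + 1) powr ((a + 1) / a)"
  obtains G H :: "real \<Rightarrow> real"
  where "\<And>x. 0 < x \<Longrightarrow> a * dpsi0 a x = x powr a * G x + H x"
    and "(G \<longlongrightarrow> (a + 1) * (1 - C)) (at_right 0)"
    and "(H \<longlongrightarrow> C - (a + 1)) (at_right 0)"
proof
  define R where "R x = (1 + x powr (a + 1)) powr (1 / a) / (1 + x) powr ((a + 1) / a)" for x :: real
  define G where "G x = (a + 1) * R x / ((1 + x powr (a + 1)) * (1 + x))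
                         - C * (a + 1) / (1 + x powr (a + 1)) ^ 2" for x :: real
  define H where "H x = C / (1 + x) ^ 2 - (a + 1) * R x / ((1 + x powr (a + 1)) * (1 + x))" for x :: real
  show "a * dpsi0 a x = x powr a * G x + H x" if "0 < x" for x
    using assms(2) that one_plus_powr_pos[of x "a + 1"]
    by (simp add: dpsi0_def G_def H_def R_def C_def divide_simps) algebra
  have powr: "continuous_on {0..1} (\<lambda>x::real. x powr (a + 1))"
    using assms by (intro continuous_on_subset[OF continuous_on_powr_nonneg]) auto
  have "continuous_on {0..1} G" "continuous_on {0..1} H"
    unfolding G_def H_def R_def
    by (intro powr continuous_intros; simp add: less_imp_neq[symmetric] one_plus_powr_pos)+
  then have "(G \<longlongrightarrow> G 0) (at_right 0)" "(H \<longlongrightarrow> H 0) (at_right 0)"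
    by (auto intro: continuous_on_Icc_at_rightD)
  moreover have "G 0 = (a + 1) * (1 - C)" "H 0 = C - (a + 1)"
    using assms(1) by (simp_all add: G_def H_def R_def algebra_simps)
  ultimately show "(G \<longlongrightarrow> (a + 1) * (1 - C)) (at_right 0)" "(H \<longlongrightarrow> C - (a + 1)) (at_right 0)"
    by simp_all
qed

lemma eventually_dpsi0_pos_at_right_0:
  fixes a :: real
  assumes "-1 < a" "a \<noteq> 0"
  shows "\<forall>\<^sub>F x in at_right 0. 0 < dpsi0 a x"
proof -
  define C where "C = (a + 1) powr ((a + 1) / a)"
  obtain G H where scaled_deriv: "\<And>x. 0 < x \<Longrightarrow> a * dpsi0 a x = x powr a * G x + H x"
    and lim_G: "(G \<longlongrightarrow> (a + 1) * (1 - C)) (at_right 0)"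
    and lim_H: "(H \<longlongrightarrow> C - (a + 1)) (at_right 0)"
    using scaled_dpsi0_decomposition[OF assms] unfolding C_def by blast
  have C: "1 < C" "a + 1 < C"
    using succ_powr_succ_div_gt_max[OF assms] by (simp_all add: C_def)
  show ?thesis
  proof (cases "0 < a")
    case True
    have "((\<lambda>x. x powr a * G x + H x) \<longlongrightarrow> 0 * ((a + 1) * (1 - C)) + (C - (a + 1))) (at_right 0)"
      using True by (intro tendsto_intros tendsto_powr_at_right_0 lim_G lim_H)
    then have "\<forall>\<^sub>F x in at_right 0. 0 < x powr a * G x + H x"
      using C by (intro order_tendstoD) auto
    with eventually_at_right_less[of 0] show ?thesis
    proof eventually_elim
      case (elim x)
      then have "0 < a * dpsi0 a x" by (simp add: scaled_deriv)
      with True show ?case by (simp add: zero_less_mult_iff)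
    qed
  next
    case False
    with assms(2) have "a < 0" by simp
    have "((\<lambda>x. G x + x powr (- a) * H x) \<longlongrightarrow> (a + 1) * (1 - C) + 0 * (C - (a + 1))) (at_right 0)"
      using \<open>a < 0\<close> by (intro tendsto_intros tendsto_powr_at_right_0 lim_G lim_H) simp
    then have "\<forall>\<^sub>F x in at_right 0. G x + x powr (- a) * H x < 0"
      using C assms(1) by (intro order_tendstoD) (auto simp: mult_pos_neg)
    with eventually_at_right_less[of 0] show ?thesis
    proof eventually_elim
      case (elim x)
      then have "x powr (- a) * (a * dpsi0 a x) < 0"
        by (simp add: scaled_deriv algebra_simps powr_minus)
      then show ?case using \<open>a < 0\<close> elim(1) by (simp add: mult_less_0_iff)
    qed
  qed
qed

lemma interior_max_of_deriv_signs:
  fixes f f' :: "real \<Rightarrow> real"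
  assumes "a < b" and cont: "continuous_on {a..b} f"
    and deriv: "\<And>x. a < x \<Longrightarrow> x \<le> b \<Longrightarrow> (f has_real_derivative f' x) (at x)"
    and "\<forall>\<^sub>F x in at_right a. 0 < f' x" and "f' b < 0"
  shows "\<exists>m. a < m \<and> m < b \<and> (\<forall>x\<in>{a..b}. f x \<le> f m) \<and> (f has_real_derivative 0) (at m)"
proof -
  obtain m where m: "m \<in> {a..b}" and max: "\<And>x. x \<in> {a..b} \<Longrightarrow> f x \<le> f m"
    using continuous_attains_sup[OF compact_Icc _ cont] \<open>a < b\<close> by auto
  obtain e where "a < e" and e: "\<And>x. a < x \<Longrightarrow> x < e \<Longrightarrow> 0 < f' x"
    using \<open>\<forall>\<^sub>F x in at_right a. 0 < f' x\<close> unfolding eventually_at_right_field by blast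
  define c where "c = min e b"
  have "a < c" using \<open>a < e\<close> \<open>a < b\<close> by (simp add: c_def)
  have "continuous_on {a..c} f" by (rule continuous_on_subset[OF cont]) (simp add: c_def)
  moreover have "\<exists>y. (f has_real_derivative y) (at x) \<and> 0 < y" if "a < x" "x < c" for x
    using that deriv[of x] e[of x] by (auto simp: c_def)
  ultimately have "f a < f c" using DERIV_pos_imp_increasing_open[OF \<open>a < c\<close>] by blast
  moreover have "c \<in> {a..b}" using \<open>a < c\<close> by (simp add: c_def)
  ultimately have "a < m" using m max[of c] by (cases "m = a") auto
  obtain d where "0 < d" and d: "\<And>h. 0 < h \<Longrightarrow> h < d \<Longrightarrow> f b < f (b - h)"
    using DERIV_neg_dec_left[OF deriv[OF \<open>a < b\<close> order.refl] \<open>f' b < 0\<close>] by blast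
  define h where "h = min (d / 2) (b - a)"
  have "0 < h" "h < d" "b - h \<in> {a..b}" using \<open>0 < d\<close> \<open>a < b\<close> by (auto simp: h_def)
  then have "m < b" using m max[of "b - h"] d[of h] by (cases "m = b") auto
  have m_deriv: "(f has_real_derivative f' m) (at m)" using deriv \<open>a < m\<close> \<open>m < b\<close> by simp
  moreover have "f' m = 0"
  proof (rule DERIV_local_max[OF m_deriv])
    show "0 < min (m - a) (b - m)" using \<open>a < m\<close> \<open>m < b\<close> by simp
    show "\<forall>y. \<bar>m - y\<bar> < min (m - a) (b - m) \<longrightarrow> f y \<le> f m"
      by (auto intro!: max simp: abs_less_iff)
  qed
  ultimately show ?thesis using \<open>a < m\<close> \<open>m < b\<close> max by auto
qed

theorem corollary2p6:
  fixes \<alpha> \<eta>1 :: real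
  assumes "\<alpha> > -1" and "\<alpha> \<noteq> 0"
    and "0 < \<eta>1" and "\<eta>1 < 1"
    and "\<eta>1 powr \<alpha> = 1 / (1 + \<alpha> * (\<eta>1 + 1))"
  shows "\<exists>\<eta>max. 0 < \<eta>max \<and> \<eta>max < \<eta>1
           \<and> (\<forall>\<eta>\<in>{0..\<eta>1}. psi0 \<alpha> \<eta> \<le> psi0 \<alpha> \<eta>max)
           \<and> ((\<lambda>\<eta>. psi0 \<alpha> \<eta>) has_real_derivative 0) (at \<eta>max)"
proof -
  have "continuous_on {0..\<eta>1} (psi0 \<alpha>)"
    using continuous_on_psi0[OF assms(1)] by (rule continuous_on_subset) auto
  moreover have "(psi0 \<alpha> has_real_derivative dpsi0 \<alpha> x) (at x)" if "0 < x" for x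
    using has_real_derivative_psi0[OF assms(2) that] .
  moreover have "\<forall>\<^sub>F x in at_right 0. 0 < dpsi0 \<alpha> x"
    using eventually_dpsi0_pos_at_right_0[OF assms(1,2)] .
  moreover have "dpsi0 \<alpha> \<eta>1 < 0"
    using dpsi0_neg_at_root[OF assms(1,2,3,5)] .
  ultimately show ?thesis
    using interior_max_of_deriv_signs[OF assms(3)] by blast
qed
end
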